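(* Let $G$ be a group and $\rho,\phi,\psi\in H^1(G;\mathbb{F}_2)$. Let $K=\mathrm{Ker}(\rho)$ and $L=K\cap\mathrm{Ker}(\phi)$. Then: (2) the canonical projections induce isomorphisms $H^1(G/X^2(K);\mathbb{F}_2)\cong H^1(G/X^2(L);\mathbb{F}_2)\cong H^1(G/X^4(G);\mathbb{F}_2)\cong H^1(G;\mathbb{F}_2)$; (3) $\rho\phi=0$ in $H^2(G;\mathbb{F}_2)$ if and only if $\rho\phi=0$ in $H^2(G/X^2(K);\mathbb{F}_2)$; (4) $\phi^2=\rho\phi+\rho\psi$ in $H^2(G;\mathbb{F}_2)$ if and only if $\phi^2=\rho\phi+\rho\psi$ in $H^2(G/X^2(L);\mathbb{F}_2)$.
   Context: For a group $H$, $X^n(H)=\langle h^n\mid h\in H\rangle$ is the subgroup generated by all $n$-th powers. In (3) and (4), classes in $H^1$ of the quotient groups are identified with classes in $H^1(G;\mathbb{F}_2)$ via the isomorphisms of (2). Products are cup products. *)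

theory Defs
  imports "HOL-Algebra.Algebra"
begin

text \<open>F_2 is modelled by bool: addition is exclusive or (\<noteq>), multiplication is conjunction.
Group cohomology with trivial F_2 coefficients is computed from the standard (bar) cochain complex.\<close>

definition Xpow :: "('a, 'b) monoid_scheme \<Rightarrow> nat \<Rightarrow> 'a set \<Rightarrow> 'a set" where
  "Xpow G n H = generate G {h [^]\<^bsub>G\<^esub> n | h. h \<in> H}"

text \<open>H^1(G;F_2) = Hom(G, F_2) (1-cocycles; the 1-coboundaries are zero for trivial coefficients),
represented as extensional functions on the carrier.\<close>
definition H1 :: "('a, 'b) monoid_scheme \<Rightarrow> ('a \<Rightarrow> bool) set" where
  "H1 G = {f. f \<in> extensional (carrier G) \<and>
              (\<forall>x\<in>carrier G. \<forall>y\<in>carrier G. f (x \<otimes>\<^bsub>G\<^esub> y) = (f x \<noteq> f y))}"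

definition ker1 :: "('a, 'b) monoid_scheme \<Rightarrow> ('a \<Rightarrow> bool) \<Rightarrow> 'a set" where
  "ker1 G f = {x \<in> carrier G. f x = False}"

definition infl :: "('a, 'b) monoid_scheme \<Rightarrow> 'a set \<Rightarrow> ('a set \<Rightarrow> bool) \<Rightarrow> ('a \<Rightarrow> bool)" where
  "infl G N f = restrict (\<lambda>x. f (N #>\<^bsub>G\<^esub> x)) (carrier G)"

definition cup :: "('a \<Rightarrow> bool) \<Rightarrow> ('a \<Rightarrow> bool) \<Rightarrow> ('a \<Rightarrow> 'a \<Rightarrow> bool)" where
  "cup a b = (\<lambda>x y. a x \<and> b y)"

definition add2 :: "('a \<Rightarrow> 'a \<Rightarrow> bool) \<Rightarrow> ('a \<Rightarrow> 'a \<Rightarrow> bool) \<Rightarrow> ('a \<Rightarrow> 'a \<Rightarrow> bool)" where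
  "add2 c d = (\<lambda>x y. c x y \<noteq> d x y)"

text \<open>A 2-cochain is a coboundary: c(x,y) = f(x) + f(y) - f(xy) for some 1-cochain f (signs irrelevant over F_2).
Equality of the classes of two 2-cocycles in H^2(G;F_2) means their difference is a coboundary.\<close>
definition coboundary2 :: "('a, 'b) monoid_scheme \<Rightarrow> ('a \<Rightarrow> 'a \<Rightarrow> bool) \<Rightarrow> bool" where
  "coboundary2 G c = (\<exists>f. \<forall>x\<in>carrier G. \<forall>y\<in>carrier G.
       c x y = ((f x \<noteq> f y) \<noteq> f (x \<otimes>\<^bsub>G\<^esub> y)))"

definition H2_eq :: "('a, 'b) monoid_scheme \<Rightarrow> ('a \<Rightarrow> 'a \<Rightarrow> bool) \<Rightarrow> ('a \<Rightarrow> 'a \<Rightarrow> bool) \<Rightarrow> bool" where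
  "H2_eq G c d = coboundary2 G (add2 c d)"

end

theory Submission
  imports Defs
begin

text \<open>A class in \<open>H\<^sup>1(G;\<bbbF>\<^sub>2)\<close> is a homomorphism to \<open>\<bbbF>\<^sub>2\<close>, so it kills every even power;
hence it factors uniquely through \<open>G/X\<^sup>k(S)\<close> for every normal \<open>S\<close> and even \<open>k\<close>, which gives (2).
In (3) and (4) the 2-cocycle \<open>c\<close> in question vanishes on \<open>S \<times> G\<close> (with \<open>S = K\<close>, resp. \<open>S = L\<close>).
If \<open>c = \<delta>f\<close>, then \<open>f\<close> is additive on \<open>S\<close>, so it kills \<open>X\<^sup>2(S)\<close>, is constant on its cosets and
descends to a cochain bounding the induced cocycle on \<open>G/X\<^sup>2(S)\<close>; conversely a bounding
cochain on the quotient pulls back along the projection.\<close>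

definition F2_hom_on :: "('a, 'b) monoid_scheme \<Rightarrow> 'a set \<Rightarrow> ('a \<Rightarrow> bool) \<Rightarrow> bool" where
  "F2_hom_on G S f \<longleftrightarrow> (\<forall>s\<in>S. \<forall>t\<in>S. f (s \<otimes>\<^bsub>G\<^esub> t) = (f s \<noteq> f t))"

text \<open>Evaluates at an arbitrary representative, so it is meaningful only for functions constant on cosets.\<close>
definition coset_lift :: "('a \<Rightarrow> 'c) \<Rightarrow> 'a set \<Rightarrow> 'c" where
  "coset_lift h A = h (SOME x. x \<in> A)"

lemma F2_hom_onD: "F2_hom_on G S f \<Longrightarrow> s \<in> S \<Longrightarrow> t \<in> S \<Longrightarrow> f (s \<otimes>\<^bsub>G\<^esub> t) = (f s \<noteq> f t)"
  by (simp add: F2_hom_on_def)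

lemma F2_hom_on_subset: "F2_hom_on G S f \<Longrightarrow> T \<subseteq> S \<Longrightarrow> F2_hom_on G T f"
  by (auto simp: F2_hom_on_def)

lemma H1_iff: "f \<in> H1 G \<longleftrightarrow> f \<in> extensional (carrier G) \<and> F2_hom_on G (carrier G) f"
  by (simp add: H1_def F2_hom_on_def)

lemma infl_rcos: "infl G N f' = f \<Longrightarrow> x \<in> carrier G \<Longrightarrow> f' (N #>\<^bsub>G\<^esub> x) = f x"
  by (auto simp: infl_def)

context group begin

lemma subgroup_nat_pow_closed:
  assumes "subgroup S G" "s \<in> S" shows "s [^] (n::nat) \<in> S"
  using subgroup_int_pow_closed[OF assms, of "int n"] subgroup.mem_carrier[OF assms] by (simp add: int_pow_int)

lemma F2_hom_on_one:
  assumes "subgroup S G" "F2_hom_on G S f" shows "\<not> f \<one>"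
  using F2_hom_onD[OF assms(2), of \<one> \<one>] subgroup.one_closed[OF assms(1)] by simp

lemma F2_hom_on_inv:
  assumes "subgroup S G" "F2_hom_on G S f" "s \<in> S" shows "f (inv s) = f s"
  using F2_hom_onD[OF assms(2) assms(3) subgroup.m_inv_closed[OF assms(1,3)]]
    F2_hom_on_one[OF assms(1,2)] subgroup.mem_carrier[OF assms(1,3)] by auto

lemma F2_hom_on_nat_pow:
  assumes "subgroup S G" "F2_hom_on G S f" "s \<in> S" shows "f (s [^] (n::nat)) = (odd n \<and> f s)"
proof (induction n)
  case 0 then show ?case using F2_hom_on_one[OF assms(1,2)] by simp
next
  case (Suc n)
  have "s [^] n \<in> S" using subgroup_nat_pow_closed[OF assms(1,3)] .
  then show ?case using Suc F2_hom_onD[OF assms(2) _ assms(3)] by auto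
qed

lemma subgroup_F2_hom_zeros:
  assumes "subgroup S G" "F2_hom_on G S f" shows "subgroup {s \<in> S. \<not> f s} G"
  using assms subgroup.subset[OF assms(1)] subgroup.one_closed[OF assms(1)] F2_hom_on_one[OF assms]
  by (intro subgroupI)
     (auto simp: F2_hom_onD F2_hom_on_inv intro: subgroup.m_closed subgroup.m_inv_closed)

lemma ker1_normal:
  assumes "f \<in> H1 G" shows "ker1 G f \<lhd> G"
proof (rule normal_invI)
  have hom: "F2_hom_on G (carrier G) f" using assms by (simp add: H1_iff)
  show "subgroup (ker1 G f) G"
    using subgroup_F2_hom_zeros[OF subgroup_self hom] by (simp add: ker1_def)
  show "x \<otimes> h \<otimes> inv x \<in> ker1 G f" if "x \<in> carrier G" "h \<in> ker1 G f" for x h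
    using that F2_hom_on_inv[OF subgroup_self hom] by (auto simp: ker1_def F2_hom_onD[OF hom])
qed

lemma Xpow_subset:
  assumes "subgroup S G" shows "Xpow G k S \<subseteq> S"
  unfolding Xpow_def
  by (rule generate_subgroup_incl[OF _ assms]) (auto intro: subgroup_nat_pow_closed[OF assms])

lemma conj_nat_pow:
  assumes "x \<in> carrier G" "g \<in> carrier G"
  shows "(x \<otimes> g \<otimes> inv x) [^] (n::nat) = x \<otimes> g [^] n \<otimes> inv x"
proof (induction n)
  case 0 then show ?case using assms by simp
next
  case (Suc n)
  have "inv x \<otimes> (x \<otimes> z) = z" if "z \<in> carrier G" for z
    using assms that by (simp add: m_assoc[symmetric])
  then show ?case using Suc assms by (simp add: m_assoc)
qed

lemma Xpow_normal:
  assumes "S \<lhd> G" shows "Xpow G k S \<lhd> G"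
proof -
  have sub: "subgroup S G" using assms by (rule normal_imp_subgroup)
  show ?thesis unfolding Xpow_def
  proof (rule normal_generateI)
    show "{h [^] k |h. h \<in> S} \<subseteq> carrier G" using subgroup.mem_carrier[OF sub] by auto
    fix h g assume "h \<in> {h [^] k |h. h \<in> S}" "g \<in> carrier G"
    then obtain s where "s \<in> S" "h = s [^] k" by blast
    then show "g \<otimes> h \<otimes> inv g \<in> {h [^] k |h. h \<in> S}"
      using \<open>g \<in> carrier G\<close> conj_nat_pow subgroup.mem_carrier[OF sub] normal_invE(2)[OF assms]
      by (metis (mono_tags, lifting) mem_Collect_eq)
  qed
qed

lemma F2_hom_on_vanishes_on_Xpow:
  assumes "subgroup S G" "F2_hom_on G S f" "even k" "n \<in> Xpow G k S"
  shows "\<not> f n"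
proof -
  have "Xpow G k S \<subseteq> {s \<in> S. \<not> f s}"
    unfolding Xpow_def using assms(3) F2_hom_on_nat_pow[OF assms(1,2)] subgroup_nat_pow_closed[OF assms(1)]
    by (intro generate_subgroup_incl subgroup_F2_hom_zeros[OF assms(1,2)]) auto
  then show ?thesis using assms(4) by blast
qed

lemma coset_lift_rcos:
  assumes "subgroup N G" "x \<in> carrier G" "\<And>n. n \<in> N \<Longrightarrow> h (n \<otimes> x) = h x"
  shows "coset_lift h (N #> x) = h x"
proof -
  have "(SOME z. z \<in> N #> x) \<in> N #> x" using rcos_self[OF assms(2,1)] by (rule someI)
  then obtain n where "n \<in> N" "(SOME z. z \<in> N #> x) = n \<otimes> x" unfolding r_coset_def by blast
  then show ?thesis using assms(3) by (simp add: coset_lift_def)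
qed

end

context normal begin

lemma FactGroup_cases:
  assumes "A \<in> carrier (G Mod H)" obtains x where "x \<in> carrier G" "A = H #> x"
  using assms unfolding carrier_FactGroup by blast

lemma rcos_in_FactGroup: "x \<in> carrier G \<Longrightarrow> H #> x \<in> carrier (G Mod H)"
  by (auto simp: carrier_FactGroup)

lemma infl_in_H1:
  assumes "f \<in> H1 (G Mod H)" shows "infl G H f \<in> H1 G"
  using assms rcos_in_FactGroup by (auto simp: H1_def infl_def rcos_sum[symmetric])

lemma inj_on_infl_H1: "inj_on (infl G H) (H1 (G Mod H))"
proof (rule inj_onI)
  fix f g assume f: "f \<in> H1 (G Mod H)" and g: "g \<in> H1 (G Mod H)" and eq: "infl G H f = infl G H g"
  show "f = g"
  proof (rule extensionalityI[where A = "carrier (G Mod H)"])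
    show "f \<in> extensional (carrier (G Mod H))" "g \<in> extensional (carrier (G Mod H))"
      using f g by (simp_all add: H1_def)
    fix A assume "A \<in> carrier (G Mod H)"
    then obtain x where "x \<in> carrier G" "A = H #> x" by (rule FactGroup_cases)
    then show "f A = g A" using infl_rcos[OF eq] by (simp add: infl_def)
  qed
qed

lemma H1_in_infl_image:
  assumes h: "h \<in> H1 G" and vanish: "\<And>n. n \<in> H \<Longrightarrow> \<not> h n"
  shows "h \<in> infl G H ` H1 (G Mod H)"
proof
  have hom: "F2_hom_on G (carrier G) h" using h by (simp add: H1_iff)
  have lift: "coset_lift h (H #> x) = h x" if "x \<in> carrier G" for x
    using that vanish F2_hom_onD[OF hom] by (intro coset_lift_rcos[OF subgroup_axioms]) auto
  let ?h' = "restrict (coset_lift h) (carrier (G Mod H))"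
  show "?h' \<in> H1 (G Mod H)"
    unfolding H1_def
    by (auto elim!: FactGroup_cases simp: rcos_sum rcos_in_FactGroup lift F2_hom_onD[OF hom])
  show "h = infl G H ?h'"
  proof (rule extensionalityI[where A = "carrier G"])
    show "h \<in> extensional (carrier G)" using h by (simp add: H1_def)
  qed (simp_all add: infl_def rcos_in_FactGroup lift)
qed

lemma bij_betw_infl_H1:
  assumes "\<And>f n. f \<in> H1 G \<Longrightarrow> n \<in> H \<Longrightarrow> \<not> f n"
  shows "bij_betw (infl G H) (H1 (G Mod H)) (H1 G)"
  unfolding bij_betw_def
  using inj_on_infl_H1 infl_in_H1 H1_in_infl_image assms by blast

lemma coboundary2_infl:
  assumes compat: "\<And>x y. x \<in> carrier G \<Longrightarrow> y \<in> carrier G \<Longrightarrow> c' (H #> x) (H #> y) = c x y"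
    and "coboundary2 (G Mod H) c'"
  shows "coboundary2 G c"
proof -
  obtain f where f: "\<forall>A\<in>carrier (G Mod H). \<forall>B\<in>carrier (G Mod H). c' A B = ((f A \<noteq> f B) \<noteq> f (A <#> B))"
    using assms(2) by (auto simp: coboundary2_def)
  show ?thesis
    unfolding coboundary2_def
    by (rule exI[where x = "\<lambda>x. f (H #> x)"])
       (simp add: f rcos_in_FactGroup rcos_sum flip: compat)
qed

lemma coboundary2_descends:
  assumes S: "subgroup S G" and HS: "H \<subseteq> Xpow G 2 S"
    and vanish: "\<And>s y. s \<in> S \<Longrightarrow> y \<in> carrier G \<Longrightarrow> \<not> c s y"
    and compat: "\<And>x y. x \<in> carrier G \<Longrightarrow> y \<in> carrier G \<Longrightarrow> c' (H #> x) (H #> y) = c x y"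
    and "coboundary2 G c"
  shows "coboundary2 (G Mod H) c'"
proof -
  obtain f where f: "\<forall>x\<in>carrier G. \<forall>y\<in>carrier G. c x y = ((f x \<noteq> f y) \<noteq> f (x \<otimes> y))"
    using assms(5) by (auto simp: coboundary2_def)
  have S_add: "f (s \<otimes> y) = (f s \<noteq> f y)" if "s \<in> S" "y \<in> carrier G" for s y
    using f vanish[OF that] that subgroup.mem_carrier[OF S] by metis
  have "F2_hom_on G S f"
    using S_add subgroup.mem_carrier[OF S] by (simp add: F2_hom_on_def)
  then have "\<not> f n" if "n \<in> H" for n
    using HS that F2_hom_on_vanishes_on_Xpow[OF S, of f 2] by auto
  moreover have "H \<subseteq> S" using HS Xpow_subset[OF S] by blast
  ultimately have lift: "coset_lift f (H #> x) = f x" if "x \<in> carrier G" for x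
    using that S_add by (intro coset_lift_rcos[OF subgroup_axioms]) auto
  show ?thesis
    unfolding coboundary2_def
    by (rule exI[where x = "coset_lift f"])
       (auto elim!: FactGroup_cases simp: rcos_sum lift compat f)
qed

lemma coboundary2_quotient_iff:
  assumes "subgroup S G" "H \<subseteq> Xpow G 2 S"
    and "\<And>s y. s \<in> S \<Longrightarrow> y \<in> carrier G \<Longrightarrow> \<not> c s y"
    and "\<And>x y. x \<in> carrier G \<Longrightarrow> y \<in> carrier G \<Longrightarrow> c' (H #> x) (H #> y) = c x y"
  shows "coboundary2 G c \<longleftrightarrow> coboundary2 (G Mod H) c'"
  using coboundary2_descends[of S c c'] coboundary2_infl[of c' c] assms by blast

end

context group begin

lemma bij_betw_infl_H1_Xpow:
  assumes "S \<lhd> G" "even k"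
  shows "bij_betw (infl G (Xpow G k S)) (H1 (G Mod Xpow G k S)) (H1 G)"
proof (rule normal.bij_betw_infl_H1[OF Xpow_normal[OF assms(1)]])
  fix f n assume "f \<in> H1 G" "n \<in> Xpow G k S"
  moreover have "subgroup S G" using assms(1) by (rule normal_imp_subgroup)
  ultimately show "\<not> f n"
    using F2_hom_on_vanishes_on_Xpow[OF _ _ assms(2)] F2_hom_on_subset subgroup.subset
    by (metis H1_iff)
qed

lemma coboundary2_Xpow2_quotient_iff:
  assumes "S \<lhd> G"
    and "\<And>s y. s \<in> S \<Longrightarrow> y \<in> carrier G \<Longrightarrow> \<not> c s y"
    and "\<And>x y. x \<in> carrier G \<Longrightarrow> y \<in> carrier G \<Longrightarrow>
           c' (Xpow G 2 S #> x) (Xpow G 2 S #> y) = c x y"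
  shows "coboundary2 G c \<longleftrightarrow> coboundary2 (G Mod Xpow G 2 S) c'"
  using normal.coboundary2_quotient_iff[OF Xpow_normal[OF assms(1)] normal_imp_subgroup[OF assms(1)]]
    assms(2,3) by blast

end

theorem lemma4:
  fixes G :: "('a, 'b) monoid_scheme" and \<rho> \<phi> \<psi> :: "'a \<Rightarrow> bool"
  assumes "group G"
    and "\<rho> \<in> H1 G" and "\<phi> \<in> H1 G" and "\<psi> \<in> H1 G"
  defines "K \<equiv> ker1 G \<rho>"
  defines "L \<equiv> K \<inter> ker1 G \<phi>"
  shows "bij_betw (infl G (Xpow G 2 K)) (H1 (G Mod Xpow G 2 K)) (H1 G)
       \<and> bij_betw (infl G (Xpow G 2 L)) (H1 (G Mod Xpow G 2 L)) (H1 G)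
       \<and> bij_betw (infl G (Xpow G 4 (carrier G))) (H1 (G Mod Xpow G 4 (carrier G))) (H1 G)
       \<and> (\<forall>\<rho>' \<phi>'. \<rho>' \<in> H1 (G Mod Xpow G 2 K) \<longrightarrow> \<phi>' \<in> H1 (G Mod Xpow G 2 K) \<longrightarrow>
            infl G (Xpow G 2 K) \<rho>' = \<rho> \<longrightarrow> infl G (Xpow G 2 K) \<phi>' = \<phi> \<longrightarrow>
            (H2_eq G (cup \<rho> \<phi>) (\<lambda>x y. False) \<longleftrightarrow>
             H2_eq (G Mod Xpow G 2 K) (cup \<rho>' \<phi>') (\<lambda>x y. False)))
       \<and> (\<forall>\<rho>' \<phi>' \<psi>'. \<rho>' \<in> H1 (G Mod Xpow G 2 L) \<longrightarrow> \<phi>' \<in> H1 (G Mod Xpow G 2 L) \<longrightarrow>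
            \<psi>' \<in> H1 (G Mod Xpow G 2 L) \<longrightarrow>
            infl G (Xpow G 2 L) \<rho>' = \<rho> \<longrightarrow> infl G (Xpow G 2 L) \<phi>' = \<phi> \<longrightarrow>
            infl G (Xpow G 2 L) \<psi>' = \<psi> \<longrightarrow>
            (H2_eq G (cup \<phi> \<phi>) (add2 (cup \<rho> \<phi>) (cup \<rho> \<psi>)) \<longleftrightarrow>
             H2_eq (G Mod Xpow G 2 L) (cup \<phi>' \<phi>') (add2 (cup \<rho>' \<phi>') (cup \<rho>' \<psi>'))))"
proof -
  interpret group G by fact
  have K: "K \<lhd> G" unfolding K_def using assms(2) by (rule ker1_normal)
  have L: "L \<lhd> G" unfolding L_def using K ker1_normal[OF assms(3)] by (rule normal_subgroup_intersect)
  have part3: "H2_eq G (cup \<rho> \<phi>) (\<lambda>x y. False) \<longleftrightarrow>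
      H2_eq (G Mod Xpow G 2 K) (cup \<rho>' \<phi>') (\<lambda>x y. False)"
    if "infl G (Xpow G 2 K) \<rho>' = \<rho>" "infl G (Xpow G 2 K) \<phi>' = \<phi>" for \<rho>' \<phi>'
    unfolding H2_eq_def using infl_rcos[OF that(1)] infl_rcos[OF that(2)]
    by (intro coboundary2_Xpow2_quotient_iff[OF K]) (auto simp: add2_def cup_def K_def ker1_def)
  have part4: "H2_eq G (cup \<phi> \<phi>) (add2 (cup \<rho> \<phi>) (cup \<rho> \<psi>)) \<longleftrightarrow>
      H2_eq (G Mod Xpow G 2 L) (cup \<phi>' \<phi>') (add2 (cup \<rho>' \<phi>') (cup \<rho>' \<psi>'))"
    if "infl G (Xpow G 2 L) \<rho>' = \<rho>" "infl G (Xpow G 2 L) \<phi>' = \<phi>"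
      "infl G (Xpow G 2 L) \<psi>' = \<psi>" for \<rho>' \<phi>' \<psi>'
    unfolding H2_eq_def using infl_rcos[OF that(1)] infl_rcos[OF that(2)] infl_rcos[OF that(3)]
    by (intro coboundary2_Xpow2_quotient_iff[OF L]) (auto simp: add2_def cup_def L_def K_def ker1_def)
  show ?thesis
    using bij_betw_infl_H1_Xpow[OF K] bij_betw_infl_H1_Xpow[OF L]
      bij_betw_infl_H1_Xpow[OF normal_self] part3 part4 by simp
qed

end
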